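(* Let $n,M\ge1$ be integers, $\mathcal X=\{x^{(1)},\dots,x^{(L)}\}\subset\mathbb C$ a set of $L$ channel input symbols, $\sigma^2>0$, $g:\mathbb C\to[0,+\infty]$ measurable, $\epsilon>0$, $B,\delta\in\mathbb R$. Let $\mathscr C$ be a homogeneous $(n,M,\epsilon,B,\delta)$-code (as defined in the context) with information rate $R=\frac{\log_2M}{n}$. Then $$R\le H(P_{\mathscr C})+\frac1{n^2}\Big(\frac1{12}-\sum_{\ell=1}^L\frac1{12P_{\mathscr C}(x^{(\ell)})+1}\Big)+\frac1n\Big(\log\sqrt{2\pi}-\sum_{\ell=1}^L\log\sqrt{2\pi P_{\mathscr C}(x^{(\ell)})}\Big)-\frac{\log n}{n}\cdot\frac{L-1}{2}.$$
   Context: Here $\log$ is the base-2 logarithm and $H(P)=-\sum_xP(x)\log_2P(x)$ is the entropy in bits; $\log 0=-\infty$. Channel: outputs $\boldsymbol Y=\boldsymbol x+\boldsymbol N_1$, $\boldsymbol Z=\boldsymbol x+\boldsymbol N_2$, all noise components i.i.d. complex circularly symmetric Gaussian with real and imaginary parts of zero mean and variance $\sigma^2/2$; $f_{Y|X}(y|x)=\frac1{\pi\sigma^2}\exp(-|y-x|^2/\sigma^2)$, $f_{\boldsymbol Y|\boldsymbol X}(\boldsymbol y|\boldsymbol x)=\prod_tf_{Y|X}(y_t|x_t)$ (same for $\boldsymbol Z$). An $(n,M)$-code is $\mathscr C=\{(\boldsymbol u(i),\mathcal D_i)\}_{i=1}^M$ with $\boldsymbol u(i)\in\mathcal X^n$,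 $|u_t(i)|\le P$ for a fixed $P>0$, pairwise disjoint measurable $\mathcal D_i\subseteq\mathbb C^n$, $M\le2^{n\lfloor\log_2L\rfloor}$; decoding sets are of product form $\mathcal D_i=\mathcal D_{i,1}\times\cdots\times\mathcal D_{i,n}$, $\mathcal D_{i,t}\subseteq\mathbb C$ measurable. $\gamma_i(\mathscr C)=1-\int_{\mathcal D_i}f_{\boldsymbol Y|\boldsymbol X}(\boldsymbol y|\boldsymbol u(i))d\boldsymbol y$, $\gamma=\frac1M\sum_i\gamma_i$; $(n,M,\epsilon)$-code: $\gamma<\epsilon$. With $\bar g(\boldsymbol z)=\frac1n\sum_tg(z_t)$, $\theta_i=\Pr[\bar g(\boldsymbol Z)<B\mid\boldsymbol X=\boldsymbol u(i)]$, $\theta=\frac1M\sum_i\theta_i$; $(n,M,\epsilon,B,\delta)$-code: $(n,M,\epsilon)$-code with $\theta<\delta$. Types: $P_{\boldsymbol u(i)}(x^{(\ell)})=\frac1n\#\{t:u_t(i)=x^{(\ell)}\}$, $P_{\mathscr C}=\frac1M\sum_iP_{\boldsymbol u(i)}$. For each $\ell$, $\mathcal E_\ell=\mathcal D_{i^\star,t^\star}$ where $(i^\star,t^\star)$ minimizes $\int_{\mathcal D_{i,t}}f_{Y|X}(y|x^{(\ell)})dy$ over $\{1,\dots,M\}\times\{1,\dots,n\}$. The code is homogeneous if $P_{\boldsymbol u(i)}=P_{\mathscr C}$ for every $i$, and $\mathcal D_{i,t}=\mathcal E_\ell$ whenever $u_t(i)=x^{(\ell)}$. *)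

theory Defs
  imports "HOL-Analysis.Analysis"
begin

definition fYX :: "real \<Rightarrow> complex \<Rightarrow> complex \<Rightarrow> real" where
  "fYX s2 y x = exp (- (cmod (y - x))\<^sup>2 / s2) / (pi * s2)"

definition sprob :: "real \<Rightarrow> complex set \<Rightarrow> complex \<Rightarrow> ennreal" where
  "sprob s2 A x = (\<integral>\<^sup>+ y. indicator A y * ennreal (fYX s2 y x) \<partial>lborel)"

definition vprob :: "real \<Rightarrow> nat \<Rightarrow> (nat \<Rightarrow> complex) \<Rightarrow> (nat \<Rightarrow> complex) set \<Rightarrow> real" where
  "vprob s2 n x A = enn2real (\<integral>\<^sup>+ y. indicator A y * ennreal (\<Prod>t\<in>{1..n}. fYX s2 (y t) (x t))
       \<partial>(PiM {1..n} (\<lambda>_. lborel)))"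

definition decset :: "nat \<Rightarrow> (nat \<Rightarrow> nat \<Rightarrow> complex set) \<Rightarrow> nat \<Rightarrow> (nat \<Rightarrow> complex) set" where
  "decset n D i = PiE {1..n} (D i)"

definition gamma_i :: "real \<Rightarrow> nat \<Rightarrow> (nat \<Rightarrow> nat \<Rightarrow> complex) \<Rightarrow> (nat \<Rightarrow> nat \<Rightarrow> complex set) \<Rightarrow> nat \<Rightarrow> real" where
  "gamma_i s2 n u D i = 1 - vprob s2 n (u i) (decset n D i)"

definition gamma_avg :: "real \<Rightarrow> nat \<Rightarrow> nat \<Rightarrow> (nat \<Rightarrow> nat \<Rightarrow> complex) \<Rightarrow> (nat \<Rightarrow> nat \<Rightarrow> complex set) \<Rightarrow> real" where
  "gamma_avg s2 n M u D = (\<Sum>i\<in>{1..M}. gamma_i s2 n u D i) / real M"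

definition gbar :: "(complex \<Rightarrow> ennreal) \<Rightarrow> nat \<Rightarrow> (nat \<Rightarrow> complex) \<Rightarrow> ereal" where
  "gbar g n z = (\<Sum>t\<in>{1..n}. enn2ereal (g (z t))) / ereal (real n)"

definition theta_i :: "real \<Rightarrow> (complex \<Rightarrow> ennreal) \<Rightarrow> real \<Rightarrow> nat \<Rightarrow> (nat \<Rightarrow> nat \<Rightarrow> complex) \<Rightarrow> nat \<Rightarrow> real" where
  "theta_i s2 g B n u i =
     vprob s2 n (u i) {z \<in> PiE {1..n} (\<lambda>_. UNIV). gbar g n z < ereal B}"

definition theta_avg :: "real \<Rightarrow> (complex \<Rightarrow> ennreal) \<Rightarrow> real \<Rightarrow> nat \<Rightarrow> nat \<Rightarrow> (nat \<Rightarrow> nat \<Rightarrow> complex) \<Rightarrow> real" where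
  "theta_avg s2 g B n M u = (\<Sum>i\<in>{1..M}. theta_i s2 g B n u i) / real M"

definition is_code :: "nat \<Rightarrow> nat \<Rightarrow> nat \<Rightarrow> (nat \<Rightarrow> complex) \<Rightarrow> real
    \<Rightarrow> (nat \<Rightarrow> nat \<Rightarrow> complex) \<Rightarrow> (nat \<Rightarrow> nat \<Rightarrow> complex set) \<Rightarrow> bool" where
  "is_code n M L xs Pw u D \<longleftrightarrow>
     (\<forall>i\<in>{1..M}. \<forall>t\<in>{1..n}. u i t \<in> xs ` {1..L} \<and> cmod (u i t) \<le> Pw \<and> D i t \<in> sets lborel) \<and>
     (\<forall>i\<in>{1..M}. \<forall>j\<in>{1..M}. i \<noteq> j \<longrightarrow> decset n D i \<inter> decset n D j = {}) \<and>
     real M \<le> 2 powr (real n * real_of_int \<lfloor>log 2 (real L)\<rfloor>)"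

definition is_code_eps_B_delta :: "real \<Rightarrow> (complex \<Rightarrow> ennreal) \<Rightarrow> nat \<Rightarrow> nat \<Rightarrow> nat \<Rightarrow> (nat \<Rightarrow> complex)
    \<Rightarrow> real \<Rightarrow> real \<Rightarrow> real \<Rightarrow> real
    \<Rightarrow> (nat \<Rightarrow> nat \<Rightarrow> complex) \<Rightarrow> (nat \<Rightarrow> nat \<Rightarrow> complex set) \<Rightarrow> bool" where
  "is_code_eps_B_delta s2 g n M L xs Pw \<epsilon> B \<delta> u D \<longleftrightarrow>
     is_code n M L xs Pw u D \<and> gamma_avg s2 n M u D < \<epsilon> \<and> theta_avg s2 g B n M u < \<delta>"

definition ptype :: "nat \<Rightarrow> (nat \<Rightarrow> complex) \<Rightarrow> complex \<Rightarrow> real" where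
  "ptype n w x = real (card {t\<in>{1..n}. w t = x}) / real n"

definition code_type :: "nat \<Rightarrow> nat \<Rightarrow> (nat \<Rightarrow> nat \<Rightarrow> complex) \<Rightarrow> complex \<Rightarrow> real" where
  "code_type n M u x = (\<Sum>i\<in>{1..M}. ptype n (u i) x) / real M"

definition homogeneous :: "real \<Rightarrow> nat \<Rightarrow> nat \<Rightarrow> nat \<Rightarrow> (nat \<Rightarrow> complex)
    \<Rightarrow> (nat \<Rightarrow> nat \<Rightarrow> complex) \<Rightarrow> (nat \<Rightarrow> nat \<Rightarrow> complex set) \<Rightarrow> bool" where
  "homogeneous s2 n M L xs u D \<longleftrightarrow>
     (\<forall>i\<in>{1..M}. \<forall>l\<in>{1..L}. ptype n (u i) (xs l) = code_type n M u (xs l)) \<and>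
     (\<exists>E :: nat \<Rightarrow> complex set.
        (\<forall>l\<in>{1..L}. \<exists>i0\<in>{1..M}. \<exists>t0\<in>{1..n}. E l = D i0 t0 \<and>
           (\<forall>i\<in>{1..M}. \<forall>t\<in>{1..n}. sprob s2 (D i0 t0) (xs l) \<le> sprob s2 (D i t) (xs l))) \<and>
        (\<forall>i\<in>{1..M}. \<forall>t\<in>{1..n}. \<forall>l\<in>{1..L}. u i t = xs l \<longrightarrow> D i t = E l))"

definition entropy2 :: "nat \<Rightarrow> (nat \<Rightarrow> real) \<Rightarrow> real" where
  "entropy2 L P = - (\<Sum>l\<in>{1..L}. P l * log 2 (P l))"

end

(*
  Robbins' form of Stirling's formula,
    C + (m + 1/2) ln m - m + 1/(12m + 1) <= ln m! <= C + (m + 1/2) ln m - m + 1/(12m)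
  with C = ln (2 pi) / 2, follows from the artanh series, which squeezes each decrement of
  ln m! - (m + 1/2) ln m + m between consecutive differences of 1/(12m + 1) and of 1/(12m),
  and from Wallis' product, which identifies the limit C.

  In a homogeneous code every codeword has the same type (k_1, ..., k_L), and its decoding set is
  determined by the codeword itself. An average error below 1 makes these sets nonempty; being
  disjoint, they force distinct messages to have distinct codewords, all permutations of one
  multiset. Hence M <= n! / (k_1! ... k_L!), and the Robbins bounds turn log M into the rate bound.
*)
theory Submission
  imports Defs "HOL-Combinatorics.Multiset_Permutations" "HOL-Real_Asymp.Real_Asymp"
begin

section \<open>Robbins' bounds on the factorial\<close>

lemma artanh_series:
  fixes y :: real
  assumes "\<bar>y\<bar> < 1"
  shows "(\<lambda>k. y ^ (2*k+1) / (2*k+1)) sums artanh y"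
proof -
  define x where "x = (1 + y) / (1 - y)"
  from assms have "x > 0" "(x - 1) / (x + 1) = y"
    by (simp_all add: x_def field_simps)
  with ln_series_quadratic[of x]
  have "(\<lambda>k. 2 * y ^ (2*k+1) / (2*k+1)) sums ln x"
    by simp
  moreover have "ln x = 2 * artanh y"
    by (simp add: artanh_def x_def)
  ultimately have "(\<lambda>k. 2 * y ^ (2*k+1) / (2*k+1)) sums (2 * artanh y)"
    by simp
  from sums_mult[OF this, of "1/2"] show ?thesis
    by simp
qed

lemma artanh_div_self_bounds:
  fixes y :: real
  assumes "0 < y" "y < 1"
  shows "y\<^sup>2 / (3 - y\<^sup>2) \<le> artanh y / y - 1"
    and "artanh y / y - 1 \<le> y\<^sup>2 / (3 * (1 - y\<^sup>2))"
proof -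
  have y2: "0 < y\<^sup>2" "y\<^sup>2 < 1" using assms by (simp_all add: power_less_one_iff)
  have "(\<lambda>k. y ^ (2*k+1) / (2*k+1) / y) sums (artanh y / y)"
    by (rule sums_divide[OF artanh_series]) (use assms in simp)
  moreover have "(\<lambda>k. y ^ (2*k+1) / (2*k+1) / y) = (\<lambda>k. (y\<^sup>2) ^ k / (2*k+1))"
    using assms by (simp add: power_mult)
  ultimately have "(\<lambda>k. (y\<^sup>2) ^ k / (2*k+1)) sums (artanh y / y)"
    by simp
  then have tail: "(\<lambda>k. (y\<^sup>2) ^ Suc k / (2 * Suc k + 1)) sums (artanh y / y - 1)"
    using sums_Suc_iff[of "\<lambda>k. (y\<^sup>2) ^ k / (2*k+1)" "artanh y / y - 1"] by simp
  have "(\<lambda>k. (y\<^sup>2 / 3) ^ Suc k) sums (y\<^sup>2 / 3 * (1 / (1 - y\<^sup>2 / 3)))"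
    unfolding power_Suc using y2 by (intro sums_mult geometric_sums) simp
  also have "y\<^sup>2 / 3 * (1 / (1 - y\<^sup>2 / 3)) = y\<^sup>2 / (3 - y\<^sup>2)"
    using y2 by (simp add: field_simps)
  finally have lower_geometric: "(\<lambda>k. (y\<^sup>2 / 3) ^ Suc k) sums (y\<^sup>2 / (3 - y\<^sup>2))" .
  have lower_termwise: "(y\<^sup>2 / 3) ^ Suc k \<le> (y\<^sup>2) ^ Suc k / (2 * Suc k + 1)" for k
  proof -
    have "2 * real k + 3 \<le> 3 ^ Suc k"
      by (induction k) auto
    then show ?thesis
      using y2 by (simp add: power_divide frac_le)
  qed
  show "y\<^sup>2 / (3 - y\<^sup>2) \<le> artanh y / y - 1"
    by (rule sums_le[OF lower_termwise lower_geometric tail])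
  have upper_geometric: "(\<lambda>k. (y\<^sup>2) ^ Suc k / 3) sums (y\<^sup>2 / (3 * (1 - y\<^sup>2)))"
    using sums_divide[OF sums_mult[OF geometric_sums, of "y\<^sup>2" "y\<^sup>2"], of 3] y2
    by (simp add: field_simps)
  have upper_termwise: "(y\<^sup>2) ^ Suc k / (2 * Suc k + 1) \<le> (y\<^sup>2) ^ Suc k / 3" for k
    by (rule divide_left_mono) (use y2 in auto)
  show "artanh y / y - 1 \<le> y\<^sup>2 / (3 * (1 - y\<^sup>2))"
    by (rule sums_le[OF upper_termwise tail upper_geometric])
qed

definition stirling_remainder :: "nat \<Rightarrow> real" where
  "stirling_remainder m = ln (fact m) - (real m + 1/2) * ln (real m) + real m"

lemma stirling_remainder_diff_eq_artanh:
  assumes m: "m \<ge> 1"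
  defines "y \<equiv> 1 / (2 * real m + 1)"
  shows "stirling_remainder m - stirling_remainder (Suc m) = artanh y / y - 1"
proof -
  have ratio: "(1 + y) / (1 - y) = (real m + 1) / real m"
    using m by (simp add: y_def divide_simps)
  have "artanh y / y = (2 * real m + 1) * ln ((1 + y) / (1 - y)) / 2"
    by (simp add: artanh_def y_def)
  also have "\<dots> = (real m + 1/2) * (ln (real m + 1) - ln (real m))"
    unfolding ratio using m by (simp add: ln_div field_simps)
  finally have "artanh y / y = (real m + 1/2) * (ln (real m + 1) - ln (real m))" .
  moreover have "ln (fact (Suc m)) = ln (real m + 1) + ln (fact m)"
    by (simp add: ln_mult add.commute)
  ultimately show ?thesis
    by (simp add: stirling_remainder_def algebra_simps)
qed

lemma stirling_remainder_diff_le: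
  assumes "m \<ge> 1"
  shows "stirling_remainder m - stirling_remainder (Suc m)
    \<le> 1 / (12 * real m) - 1 / (12 * (real m + 1))"
proof -
  define y where "y = 1 / (2 * real m + 1)"
  have "0 < y" "y < 1" using assms by (simp_all add: y_def)
  note bound = artanh_div_self_bounds(2)[OF this]
  have "y\<^sup>2 / (3 * (1 - y\<^sup>2)) = 1 / (3 * ((2 * real m + 1)\<^sup>2 - 1))"
    using assms by (simp add: y_def field_simps)
  also have "\<dots> = 1 / (12 * real m) - 1 / (12 * (real m + 1))"
    using assms by (simp add: field_simps power2_eq_square)
  finally show ?thesis
    using bound unfolding stirling_remainder_diff_eq_artanh[OF assms, folded y_def] by simp
qed

lemma stirling_remainder_diff_ge:
  assumes "m \<ge> 1"
  shows "1 / (12 * real m + 1) - 1 / (12 * (real m + 1) + 1)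
    \<le> stirling_remainder m - stirling_remainder (Suc m)"
proof -
  define y where "y = 1 / (2 * real m + 1)"
  have "0 < y" "y < 1" using assms by (simp_all add: y_def)
  note bound = artanh_div_self_bounds(1)[OF this]
  have "1 \<le> (2 * real m + 1)\<^sup>2"
    by simp
  then have pos: "0 < 3 * (2 * real m + 1)\<^sup>2 - 1"
    by linarith
  have "1 / (12 * real m + 1) - 1 / (12 * (real m + 1) + 1) \<le> 1 / (3 * (2 * real m + 1)\<^sup>2 - 1)"
    using assms pos by (simp add: field_simps) (simp add: algebra_simps power2_eq_square)
  also have "\<dots> = y\<^sup>2 / (3 - y\<^sup>2)"
    by (simp add: y_def field_simps)
  finally show ?thesis
    using bound unfolding stirling_remainder_diff_eq_artanh[OF assms, folded y_def] by simp
qed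

lemma wallis_partial_product_eq:
  "(\<Prod>k=1..n. 4 * real k ^ 2 / (4 * real k ^ 2 - 1))
     = fact n ^ 4 * 16 ^ n / (fact (2 * n) ^ 2 * (2 * real n + 1))"
proof (induction n)
  case 0
  then show ?case by simp
next
  case (Suc n)
  define F G a where "F = (fact n :: real)" and "G = (fact (2 * n) :: real)" and "a = real n"
  have pos: "G > 0" "2 * a + 1 > 0" "2 * a + 2 > 0" "2 * a + 3 > 0"
    by (simp_all add: G_def a_def)
  have "(\<Prod>k=1..Suc n. 4 * real k ^ 2 / (4 * real k ^ 2 - 1))
      = (\<Prod>k=1..n. 4 * real k ^ 2 / (4 * real k ^ 2 - 1))
        * (4 * (a + 1) ^ 2 / (4 * (a + 1) ^ 2 - 1))"
    by (simp add: a_def add.commute)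
  also have "\<dots> = F ^ 4 * 16 ^ n / (G ^ 2 * (2 * a + 1))
      * (4 * (a + 1) ^ 2 / ((2 * a + 1) * (2 * a + 3)))"
    unfolding Suc.IH by (simp add: F_def G_def a_def algebra_simps power2_eq_square)
  also have "\<dots>
      = ((a + 1) * F) ^ 4 * 16 ^ Suc n / (((2 * a + 2) * (2 * a + 1) * G) ^ 2 * (2 * (a + 1) + 1))"
    using pos by (simp add: divide_simps) algebra
  also have "\<dots> = fact (Suc n) ^ 4 * 16 ^ Suc n / (fact (2 * Suc n) ^ 2 * (2 * real (Suc n) + 1))"
    by (simp add: F_def G_def a_def algebra_simps)
  finally show ?case .
qed

lemma stirling_remainder_wallis_eq:
  assumes "n \<ge> 1"
  shows "2 * (2 * stirling_remainder n - stirling_remainder (2 * n))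
    = ln (2 * (\<Prod>k=1..n. 4 * real k ^ 2 / (4 * real k ^ 2 - 1)) * ((2 * real n + 1) / real n))"
proof -
  have pos: "(fact n :: real) > 0" "(fact (2 * n) :: real) > 0" "real n > 0"
    using assms by auto
  have "2 * (\<Prod>k=1..n. 4 * real k ^ 2 / (4 * real k ^ 2 - 1)) * ((2 * real n + 1) / real n)
      = 2 * fact n ^ 4 * 2 ^ (4 * n) / (fact (2 * n) ^ 2 * real n)"
    unfolding wallis_partial_product_eq by (simp add: power_mult)
  also have "ln \<dots>
      = ln 2 + 4 * ln (fact n) + real n * (4 * ln 2) - 2 * ln (fact (2 * n)) - ln (real n)"
    using pos by (simp add: ln_div ln_mult ln_realpow)
  finally show ?thesis
    using pos by (simp add: stirling_remainder_def ln_mult algebra_simps)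
qed

lemma incseq_stirling_remainder_upper:
  "incseq (\<lambda>j. stirling_remainder (Suc j) - 1 / (12 * real (Suc j)))"
proof (rule incseq_SucI)
  fix j
  show "stirling_remainder (Suc j) - 1 / (12 * real (Suc j))
      \<le> stirling_remainder (Suc (Suc j)) - 1 / (12 * real (Suc (Suc j)))"
    using stirling_remainder_diff_le[of "Suc j"] by (simp add: add.commute)
qed

lemma decseq_stirling_remainder_lower:
  "decseq (\<lambda>j. stirling_remainder (Suc j) - 1 / (12 * real (Suc j) + 1))"
proof (rule decseq_SucI)
  fix j
  show "stirling_remainder (Suc (Suc j)) - 1 / (12 * real (Suc (Suc j)) + 1)
      \<le> stirling_remainder (Suc j) - 1 / (12 * real (Suc j) + 1)"
    using stirling_remainder_diff_ge[of "Suc j"] by (simp add: add.commute)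
qed

lemma convergent_stirling_remainder: "convergent stirling_remainder"
proof -
  define lower where "lower j = stirling_remainder (Suc j) - 1 / (12 * real (Suc j) + 1)" for j
  define upper where "upper j = stirling_remainder (Suc j) - 1 / (12 * real (Suc j))" for j
  have "upper 0 \<le> lower j" for j
  proof -
    have "1 / (12 * real (Suc j) + 1) \<le> 1 / (12 * real (Suc j))"
      by (rule divide_left_mono) auto
    then show ?thesis
      using incseq_stirling_remainder_upper[THEN incseqD, of 0 j]
      unfolding upper_def lower_def by linarith
  qed
  then obtain C where "lower \<longlonglongrightarrow> C"
    using decseq_convergent[OF decseq_stirling_remainder_lower[folded lower_def]] by blast
  moreover have "(\<lambda>j. 1 / (12 * real (Suc j) + 1)) \<longlonglongrightarrow> 0"
    by real_asymp
  ultimately have "(\<lambda>j. stirling_remainder (Suc j)) \<longlonglongrightarrow> C"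
    using tendsto_add by (fastforce simp: lower_def)
  then show ?thesis
    unfolding convergent_def by (blast intro: LIMSEQ_imp_Suc)
qed

lemma stirling_remainder_tendsto: "stirling_remainder \<longlonglongrightarrow> ln (2 * pi) / 2"
proof -
  obtain C where lim: "stirling_remainder \<longlonglongrightarrow> C"
    using convergent_stirling_remainder by (auto simp: convergent_def)
  have "(\<lambda>j. stirling_remainder (2 * Suc j)) \<longlonglongrightarrow> C"
    using LIMSEQ_subseq_LIMSEQ[OF lim, of "\<lambda>j. 2 * Suc j"] by (simp add: strict_mono_def o_def)
  with LIMSEQ_Suc[OF lim]
  have "(\<lambda>j. 2 * (2 * stirling_remainder (Suc j) - stirling_remainder (2 * Suc j)))
      \<longlonglongrightarrow> 2 * (2 * C - C)"
    by (intro tendsto_intros)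
  moreover have "(\<lambda>j. 2 * (2 * stirling_remainder (Suc j) - stirling_remainder (2 * Suc j)))
      \<longlonglongrightarrow> ln (2 * (pi / 2) * 2)"
  proof -
    have "(\<lambda>j. \<Prod>k=1..Suc j. 4 * real k ^ 2 / (4 * real k ^ 2 - 1)) \<longlonglongrightarrow> pi / 2"
      using wallis by (rule LIMSEQ_Suc)
    moreover have "(\<lambda>j. (2 * real (Suc j) + 1) / real (Suc j)) \<longlonglongrightarrow> 2"
      by real_asymp
    moreover have "2 * (2 * stirling_remainder (Suc j) - stirling_remainder (2 * Suc j))
        = ln (2 * (\<Prod>k=1..Suc j. 4 * real k ^ 2 / (4 * real k ^ 2 - 1))
               * ((2 * real (Suc j) + 1) / real (Suc j)))" for j
      by (rule stirling_remainder_wallis_eq) simp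
    ultimately show ?thesis
      by (simp only:) (intro tendsto_intros, auto)
  qed
  ultimately have "2 * (2 * C - C) = ln (2 * (pi / 2) * 2)"
    by (rule LIMSEQ_unique)
  then have "C = ln (2 * pi) / 2"
    by (simp add: mult.commute)
  with lim show ?thesis by simp
qed

theorem ln_fact_le:
  assumes "m \<ge> 1"
  shows "ln (fact m) \<le> ln (2 * pi) / 2 + (real m + 1/2) * ln (real m) - real m + 1 / (12 * real m)"
proof -
  have "(\<lambda>j. stirling_remainder (Suc j) - 1 / (12 * real (Suc j))) \<longlonglongrightarrow> ln (2 * pi) / 2 - 0"
    by (intro tendsto_diff LIMSEQ_Suc[OF stirling_remainder_tendsto]) real_asymp
  from incseq_le[OF incseq_stirling_remainder_upper this, of "m - 1"] assms show ?thesis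
    by (simp add: stirling_remainder_def)
qed

theorem ln_fact_ge:
  assumes "m \<ge> 1"
  shows "ln (2 * pi) / 2 + (real m + 1/2) * ln (real m) - real m + 1 / (12 * real m + 1)
    \<le> ln (fact m)"
proof -
  have "(\<lambda>j. stirling_remainder (Suc j) - 1 / (12 * real (Suc j) + 1)) \<longlonglongrightarrow> ln (2 * pi) / 2 - 0"
    by (intro tendsto_diff LIMSEQ_Suc[OF stirling_remainder_tendsto]) real_asymp
  from decseq_ge[OF decseq_stirling_remainder_lower this, of "m - 1"] assms show ?thesis
    by (simp add: stirling_remainder_def)
qed

section \<open>Counting the codewords of a homogeneous code\<close>

lemma card_mult_prod_fact_count_le_fact_size:
  assumes "inj_on w I" and "\<And>i. i \<in> I \<Longrightarrow> mset (w i) = A"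
  shows "card I * (\<Prod>x\<in>set_mset A. fact (count A x)) \<le> fact (size A)"
proof -
  have "w ` I \<subseteq> permutations_of_multiset A"
    using assms(2) by (auto intro: permutations_of_multisetI)
  then have "card I \<le> card (permutations_of_multiset A)"
    using card_mono[OF finite_permutations_of_multiset] card_image[OF assms(1)] by metis
  then show ?thesis
    using card_permutations_of_multiset_aux[of A] by (metis mult_le_mono1)
qed

lemma count_mset_map_upt:
  "count (mset (map f [1..<Suc n])) x = card {t\<in>{1..n}. f t = x}"
proof -
  have "count (mset (map f [1..<Suc n])) x
      = (\<Sum>y\<in>f -` {x} \<inter> set_mset (mset_set {1..<Suc n}). count (mset_set {1..<Suc n}) y)"
    by (simp only: mset_map mset_upt count_image_mset)
  also have "\<dots> = card (f -` {x} \<inter> {1..<Suc n})"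
    by simp
  also have "f -` {x} \<inter> {1..<Suc n} = {t\<in>{1..n}. f t = x}"
    by auto
  finally show ?thesis .
qed

lemma sum_card_symbol_occurrences:
  fixes L :: nat
  assumes "finite T" and "inj_on xs {1..L}" and "\<And>t. t \<in> T \<Longrightarrow> w t \<in> xs ` {1..L}"
  shows "(\<Sum>l\<in>{1..L}. card {t\<in>T. w t = xs l}) = card T"
proof -
  have "card {l\<in>{1..L}. w t = xs l} = 1" if t: "t \<in> T" for t
  proof -
    obtain l where "l \<in> {1..L}" "w t = xs l"
      using assms(3)[OF t] by blast
    with assms(2) have "{l\<in>{1..L}. w t = xs l} = {l}"
      by (auto dest: inj_onD)
    then show ?thesis by simp
  qed
  then have "(\<Sum>l\<in>{1..L}. card {t\<in>T. w t = xs l}) = (\<Sum>t\<in>T. 1)"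
    using sum_multicount_gen[of "{1..L}" T "\<lambda>l t. w t = xs l" "\<lambda>_. 1"] assms(1) by simp
  then show ?thesis by simp
qed

lemma homogeneous_count_eq:
  assumes "homogeneous s2 n M L xs u D" and "i \<in> {1..M}" "j \<in> {1..M}" "l \<in> {1..L}"
  shows "card {t\<in>{1..n}. u i t = xs l} = card {t\<in>{1..n}. u j t = xs l}"
proof (cases "n = 0")
  case False
  from assms have "ptype n (u i) (xs l) = ptype n (u j) (xs l)"
    unfolding homogeneous_def by simp
  with False show ?thesis
    by (simp add: ptype_def)
qed simp

lemma homogeneous_symbol_decoding_sets:
  assumes "homogeneous s2 n M L xs u D"
  obtains E where "\<And>i t l. i \<in> {1..M} \<Longrightarrow> t \<in> {1..n} \<Longrightarrow> l \<in> {1..L} \<Longrightarrow> u i t = xs l \<Longrightarrow> D i t = E l"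
proof -
  from assms have "\<exists>E. \<forall>i\<in>{1..M}. \<forall>t\<in>{1..n}. \<forall>l\<in>{1..L}. u i t = xs l \<longrightarrow> D i t = E l"
    unfolding homogeneous_def by (elim conjE exE) (rule exI, assumption)
  then obtain E where E: "\<forall>i\<in>{1..M}. \<forall>t\<in>{1..n}. \<forall>l\<in>{1..L}. u i t = xs l \<longrightarrow> D i t = E l" ..
  show ?thesis
    by (rule that) (use E in simp)
qed

lemma homogeneous_code_decset_nonempty:
  assumes code: "is_code n M L xs Pw u D" and hom: "homogeneous s2 n M L xs u D"
    and err: "gamma_avg s2 n M u D < 1"
    and occurs: "\<And>i l. i \<in> {1..M} \<Longrightarrow> l \<in> {1..L} \<Longrightarrow> \<exists>t\<in>{1..n}. u i t = xs l"
    and i: "i \<in> {1..M}"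
  shows "decset n D i \<noteq> {}"
proof -
  obtain E where DE: "\<And>i t l. i \<in> {1..M} \<Longrightarrow> t \<in> {1..n} \<Longrightarrow> l \<in> {1..L} \<Longrightarrow> u i t = xs l \<Longrightarrow> D i t = E l"
    using homogeneous_symbol_decoding_sets[OF hom] by blast
  have "E l \<noteq> {}" if l: "l \<in> {1..L}" for l
  proof
    assume "E l = {}"
    have "gamma_i s2 n u D j = 1" if j: "j \<in> {1..M}" for j
    proof -
      obtain t where "t \<in> {1..n}" "u j t = xs l"
        using occurs[OF j l] by blast
      with \<open>E l = {}\<close> have "D j t = {}"
        using DE[OF j _ l] by blast
      with \<open>t \<in> {1..n}\<close> have "decset n D j = {}"
        by (auto simp: decset_def PiE_eq_empty_iff)
      then show ?thesis
        by (simp add: gamma_i_def vprob_def)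
    qed
    with i have "gamma_avg s2 n M u D = 1"
      by (simp add: gamma_avg_def)
    with err show False by simp
  qed
  moreover have "\<exists>l\<in>{1..L}. u i t = xs l" if "t \<in> {1..n}" for t
    using code i that unfolding is_code_def by blast
  ultimately have "D i t \<noteq> {}" if "t \<in> {1..n}" for t
    using DE[OF i that] that by metis
  then show ?thesis
    by (simp add: decset_def PiE_eq_empty_iff)
qed

lemma homogeneous_code_words_inj:
  assumes code: "is_code n M L xs Pw u D" and hom: "homogeneous s2 n M L xs u D"
    and err: "gamma_avg s2 n M u D < 1"
    and occurs: "\<And>i l. i \<in> {1..M} \<Longrightarrow> l \<in> {1..L} \<Longrightarrow> \<exists>t\<in>{1..n}. u i t = xs l"
  shows "inj_on (\<lambda>i. map (u i) [1..<Suc n]) {1..M}"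
proof (rule inj_onI)
  fix i j assume i: "i \<in> {1..M}" and j: "j \<in> {1..M}"
    and "map (u i) [1..<Suc n] = map (u j) [1..<Suc n]"
  then have same_word: "\<forall>t\<in>{1..n}. u i t = u j t"
    by (simp only: map_eq_conv set_upt atLeastLessThanSuc_atLeastAtMost)
  obtain E where DE: "\<And>i t l. i \<in> {1..M} \<Longrightarrow> t \<in> {1..n} \<Longrightarrow> l \<in> {1..L} \<Longrightarrow> u i t = xs l \<Longrightarrow> D i t = E l"
    using homogeneous_symbol_decoding_sets[OF hom] by blast
  have "D i t = D j t" if t: "t \<in> {1..n}" for t
  proof -
    obtain l where "l \<in> {1..L}" "u i t = xs l"
      using code i t unfolding is_code_def by blast
    with DE[OF i t] DE[OF j t] same_word t show ?thesis by simp
  qed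
  then have "decset n D i = decset n D j"
    unfolding decset_def by (rule PiE_cong)
  moreover have "decset n D i \<noteq> {}"
    by (rule homogeneous_code_decset_nonempty[OF code hom err occurs i])
  moreover have "i \<noteq> j \<Longrightarrow> decset n D i \<inter> decset n D j = {}"
    using code i j unfolding is_code_def by simp
  ultimately show "i = j"
    by auto
qed

lemma homogeneous_symbol_occurs:
  assumes "homogeneous s2 n M L xs u D" and "i \<in> {1..M}" "l \<in> {1..L}"
    and "code_type n M u (xs l) > 0"
  shows "\<exists>t\<in>{1..n}. u i t = xs l"
proof -
  from assms have "ptype n (u i) (xs l) > 0"
    unfolding homogeneous_def by simp
  then have "0 < card {t\<in>{1..n}. u i t = xs l}"
    by (simp add: ptype_def zero_less_divide_iff)
  then have "{t\<in>{1..n}. u i t = xs l} \<noteq> {}"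
    by (metis card.empty less_irrefl)
  then show ?thesis
    by blast
qed

lemma homogeneous_code_type_eq:
  assumes "homogeneous s2 n M L xs u D" and "M \<ge> 1" and "l \<in> {1..L}"
  shows "code_type n M u (xs l) = real (card {t\<in>{1..n}. u 1 t = xs l}) / real n"
proof -
  from assms have "ptype n (u 1) (xs l) = code_type n M u (xs l)"
    unfolding homogeneous_def by simp
  then show ?thesis
    by (simp add: ptype_def)
qed

lemma homogeneous_code_mset_eq:
  assumes code: "is_code n M L xs Pw u D" and hom: "homogeneous s2 n M L xs u D"
    and i: "i \<in> {1..M}" and j: "j \<in> {1..M}"
  shows "mset (map (u i) [1..<Suc n]) = mset (map (u j) [1..<Suc n])"
proof (rule multiset_eqI)
  fix x
  show "count (mset (map (u i) [1..<Suc n])) x = count (mset (map (u j) [1..<Suc n])) x"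
  proof (cases "x \<in> xs ` {1..L}")
    case True
    then obtain l where "l \<in> {1..L}" "x = xs l"
      by blast
    then show ?thesis
      unfolding count_mset_map_upt using homogeneous_count_eq[OF hom i j] by simp
  next
    case False
    with code i j have "{t\<in>{1..n}. u i t = x} = {}" "{t\<in>{1..n}. u j t = x} = {}"
      unfolding is_code_def by auto
    then show ?thesis
      by (simp only: count_mset_map_upt)
  qed
qed

lemma homogeneous_code_multinomial_bound:
  assumes code: "is_code n M L xs Pw u D" and hom: "homogeneous s2 n M L xs u D"
    and err: "gamma_avg s2 n M u D < 1" and xs: "inj_on xs {1..L}" and M: "M \<ge> 1"
    and occurs: "\<And>i l. i \<in> {1..M} \<Longrightarrow> l \<in> {1..L} \<Longrightarrow> \<exists>t\<in>{1..n}. u i t = xs l"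
  shows "M * (\<Prod>l\<in>{1..L}. fact (card {t\<in>{1..n}. u 1 t = xs l})) \<le> fact n"
proof -
  define A where "A = mset (map (u 1) [1..<Suc n])"
  have one: "1 \<in> {1..M}"
    using M by simp
  have same_type: "mset (map (u i) [1..<Suc n]) = A" if "i \<in> {1..M}" for i
    unfolding A_def using code hom that one by (rule homogeneous_code_mset_eq)
  have set_A: "set_mset A = xs ` {1..L}"
  proof
    show "set_mset A \<subseteq> xs ` {1..L}"
      using code one unfolding is_code_def by (auto simp: A_def)
    show "xs ` {1..L} \<subseteq> set_mset A"
      using occurs[OF one] by (force simp: A_def)
  qed
  have "count A (xs l) = card {t\<in>{1..n}. u 1 t = xs l}" for l
    by (simp only: A_def count_mset_map_upt)
  then have prod_eq: "(\<Prod>l\<in>{1..L}. fact (card {t\<in>{1..n}. u 1 t = xs l}))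
      = (\<Prod>x\<in>set_mset A. fact (count A x))"
    unfolding set_A prod.reindex[OF xs] comp_def by simp
  have "M * (\<Prod>l\<in>{1..L}. fact (card {t\<in>{1..n}. u 1 t = xs l}))
      = card {1..M} * (\<Prod>x\<in>set_mset A. fact (count A x))"
    unfolding prod_eq by simp
  also have "\<dots> \<le> fact (size A)"
    using homogeneous_code_words_inj[OF code hom err occurs] same_type
    by (rule card_mult_prod_fact_count_le_fact_size)
  also have "size A = n"
    by (simp add: A_def)
  finally show ?thesis .
qed

section \<open>The rate bound\<close>

definition rate_upper_bound :: "nat \<Rightarrow> nat \<Rightarrow> (nat \<Rightarrow> real) \<Rightarrow> real" where
  "rate_upper_bound n L P =
     entropy2 L P
     + 1 / (real n)\<^sup>2 * (1 / 12 - (\<Sum>l\<in>{1..L}. 1 / (12 * P l + 1)))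
     + 1 / real n * (log 2 (sqrt (2 * pi)) - (\<Sum>l\<in>{1..L}. log 2 (sqrt (2 * pi * P l))))
     - log 2 (real n) / real n * ((real L - 1) / 2)"

lemma entropy2_counts:
  fixes K :: "nat \<Rightarrow> real"
  assumes "n \<ge> 1" and K: "\<And>l. l \<in> {1..L} \<Longrightarrow> K l > 0"
    and sum_K: "(\<Sum>l\<in>{1..L}. K l) = real n"
  shows "real n * ln 2 * entropy2 L (\<lambda>l. K l / real n)
    = real n * ln (real n) - (\<Sum>l\<in>{1..L}. K l * ln (K l))"
proof -
  have "real n * ln 2 * (K l / real n * log 2 (K l / real n)) = K l * ln (K l) - K l * ln (real n)"
    if "l \<in> {1..L}" for l
    using K[OF that] assms(1) by (simp add: log_def ln_div field_simps)
  with sum_K show ?thesis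
    by (simp add: entropy2_def sum_distrib_left sum_subtractf flip: sum_distrib_right)
qed

lemma rate_upper_bound_ln_form:
  fixes K :: "nat \<Rightarrow> real"
  assumes n: "n \<ge> 1" and K: "\<And>l. l \<in> {1..L} \<Longrightarrow> K l > 0"
    and sum_K: "(\<Sum>l\<in>{1..L}. K l) = real n"
  shows "real n * ln 2 * rate_upper_bound n L (\<lambda>l. K l / real n)
    = real n * ln (real n) - (\<Sum>l\<in>{1..L}. K l * ln (K l))
      + ln 2 * (1 / (12 * real n) - (\<Sum>l\<in>{1..L}. 1 / (12 * K l + real n)))
      + (1 - real L) * ln (2 * pi) / 2 - (\<Sum>l\<in>{1..L}. ln (K l)) / 2 + ln (real n) / 2"
proof -
  have n_pos: "real n > 0"
    using n by simp
  have entropy: "real n * ln 2 * entropy2 L (\<lambda>l. K l / real n)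
      = real n * ln (real n) - (\<Sum>l\<in>{1..L}. K l * ln (K l))"
    by (rule entropy2_counts[OF n K sum_K])
  have inverse_terms:
    "real n * ln 2 * (1 / (real n)\<^sup>2 * (1 / 12 - (\<Sum>l\<in>{1..L}. 1 / (12 * (K l / real n) + 1))))
      = ln 2 * (1 / (12 * real n) - (\<Sum>l\<in>{1..L}. 1 / (12 * K l + real n)))"
  proof -
    have "1 / (12 * (K l / real n) + 1) = real n * (1 / (12 * K l + real n))" if "l \<in> {1..L}" for l
      using K[OF that] n_pos by (simp add: field_simps)
    then have "(\<Sum>l\<in>{1..L}. 1 / (12 * (K l / real n) + 1))
        = real n * (\<Sum>l\<in>{1..L}. 1 / (12 * K l + real n))"
      by (simp add: sum_distrib_left)
    then show ?thesis
      using n_pos by (simp add: field_simps power2_eq_square)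
  qed
  have sqrt_terms: "real n * ln 2 * (1 / real n
        * (log 2 (sqrt (2 * pi)) - (\<Sum>l\<in>{1..L}. log 2 (sqrt (2 * pi * (K l / real n))))))
      = (1 - real L) * ln (2 * pi) / 2 - (\<Sum>l\<in>{1..L}. ln (K l)) / 2 + real L * ln (real n) / 2"
  proof -
    have "ln 2 * log 2 (sqrt (2 * pi * (K l / real n)))
        = (ln (2 * pi) + ln (K l) - ln (real n)) / 2"
      if "l \<in> {1..L}" for l
      using K[OF that] n_pos by (simp add: log_def ln_sqrt ln_mult ln_div)
    then have sum_eq: "ln 2 * (\<Sum>l\<in>{1..L}. log 2 (sqrt (2 * pi * (K l / real n))))
        = real L * ln (2 * pi) / 2 + (\<Sum>l\<in>{1..L}. ln (K l)) / 2 - real L * ln (real n) / 2"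
      by (simp add: sum_distrib_left sum.distrib sum_subtractf add_divide_distrib
          diff_divide_distrib flip: sum_divide_distrib)
    have "ln 2 * log 2 (sqrt (2 * pi)) = ln (2 * pi) / 2"
      by (simp add: log_def ln_sqrt)
    moreover have "real n * ln 2 * (1 / real n
        * (log 2 (sqrt (2 * pi)) - (\<Sum>l\<in>{1..L}. log 2 (sqrt (2 * pi * (K l / real n))))))
        = ln 2 * log 2 (sqrt (2 * pi)) - ln 2 * (\<Sum>l\<in>{1..L}. log 2 (sqrt (2 * pi * (K l / real n))))"
      using n_pos by (simp add: right_diff_distrib)
    ultimately show ?thesis
      unfolding sum_eq by (simp add: field_simps)
  qed
  have log_term: "real n * ln 2 * (log 2 (real n) / real n * ((real L - 1) / 2))
      = (real L - 1) * ln (real n) / 2"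
    using n_pos by (simp add: log_def)
  have "real n * ln 2 * rate_upper_bound n L (\<lambda>l. K l / real n)
      = real n * ln 2 * entropy2 L (\<lambda>l. K l / real n)
        + real n * ln 2 * (1 / (real n)\<^sup>2 * (1 / 12 - (\<Sum>l\<in>{1..L}. 1 / (12 * (K l / real n) + 1))))
        + real n * ln 2 * (1 / real n
            * (log 2 (sqrt (2 * pi)) - (\<Sum>l\<in>{1..L}. log 2 (sqrt (2 * pi * (K l / real n))))))
        - real n * ln 2 * (log 2 (real n) / real n * ((real L - 1) / 2))"
    by (simp add: rate_upper_bound_def algebra_simps)
  also have "\<dots> = real n * ln (real n) - (\<Sum>l\<in>{1..L}. K l * ln (K l))
      + ln 2 * (1 / (12 * real n) - (\<Sum>l\<in>{1..L}. 1 / (12 * K l + real n)))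
      + (1 - real L) * ln (2 * pi) / 2 - (\<Sum>l\<in>{1..L}. ln (K l)) / 2 + ln (real n) / 2"
    unfolding entropy inverse_terms sqrt_terms log_term by (simp add: field_simps)
  finally show ?thesis .
qed

lemma ln_multinomial_le:
  fixes k :: "nat \<Rightarrow> nat"
  assumes n: "n \<ge> 1" and k: "\<And>l. l \<in> {1..L} \<Longrightarrow> k l \<ge> 1"
    and sum_k: "(\<Sum>l\<in>{1..L}. k l) = n"
  shows "ln (fact n) - (\<Sum>l\<in>{1..L}. ln (fact (k l)))
    \<le> real n * ln (real n) - (\<Sum>l\<in>{1..L}. real (k l) * ln (real (k l)))
      + (1 / (12 * real n) - (\<Sum>l\<in>{1..L}. 1 / (12 * real (k l) + 1)))
      + (1 - real L) * ln (2 * pi) / 2 - (\<Sum>l\<in>{1..L}. ln (real (k l))) / 2 + ln (real n) / 2"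
proof -
  have "(\<Sum>l\<in>{1..L}. ln (2 * pi) / 2 + (real (k l) + 1/2) * ln (real (k l)) - real (k l)
          + 1 / (12 * real (k l) + 1))
      \<le> (\<Sum>l\<in>{1..L}. ln (fact (k l)))"
    by (intro sum_mono ln_fact_ge k)
  moreover have "(\<Sum>l\<in>{1..L}. ln (2 * pi) / 2 + (real (k l) + 1/2) * ln (real (k l)) - real (k l)
          + 1 / (12 * real (k l) + 1))
      = real L * ln (2 * pi) / 2 + (\<Sum>l\<in>{1..L}. real (k l) * ln (real (k l)))
        + (\<Sum>l\<in>{1..L}. ln (real (k l))) / 2 - real n + (\<Sum>l\<in>{1..L}. 1 / (12 * real (k l) + 1))"
    using sum_k
    by (simp add: sum.distrib sum_subtractf distrib_right sum_divide_distrib flip: of_nat_sum)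
  moreover have "(real n + 1/2) * ln (real n) = real n * ln (real n) + ln (real n) / 2"
    "(1 - real L) * ln (2 * pi) / 2 = ln (2 * pi) / 2 - real L * ln (2 * pi) / 2"
    by (simp_all add: algebra_simps diff_divide_distrib)
  ultimately show ?thesis
    using ln_fact_le[OF n] by linarith
qed

(* The 1/n^2 term of the rate bound is not converted from nats to bits; this inequality shows
   that the Robbins corrections of the multinomial coefficient still fit under it when L >= 2. *)
lemma stirling_correction_le:
  fixes K :: "nat \<Rightarrow> real"
  assumes L: "L \<ge> 2" and n: "n \<ge> 1" and K: "\<And>l. l \<in> {1..L} \<Longrightarrow> 0 < K l \<and> K l \<le> real n"
  shows "1 / (12 * real n) - (\<Sum>l\<in>{1..L}. 1 / (12 * K l + 1))
    \<le> ln 2 * (1 / (12 * real n) - (\<Sum>l\<in>{1..L}. 1 / (12 * K l + real n)))"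
proof -
  have ln2: "0 < ln (2 :: real)" "ln (2 :: real) < 1"
    using ln_2_less_1 by auto
  have termwise:
    "(1 - ln 2) * (1 / (13 * real n)) \<le> 1 / (12 * K l + 1) - ln 2 * (1 / (12 * K l + real n))"
    if l: "l \<in> {1..L}" for l
  proof -
    have "1 / (12 * K l + real n) \<le> 1 / (12 * K l + 1)"
      using K[OF l] n by (intro divide_left_mono) auto
    moreover have "1 / (13 * real n) \<le> 1 / (12 * K l + real n)"
      using K[OF l] n by (intro divide_left_mono) auto
    then have "(1 - ln 2) * (1 / (13 * real n)) \<le> (1 - ln 2) * (1 / (12 * K l + real n))"
      using ln2 by (intro mult_left_mono) auto
    moreover have "(1 - ln 2) * (1 / (12 * K l + real n))
        = 1 / (12 * K l + real n) - ln 2 * (1 / (12 * K l + real n))"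
      by (simp only: left_diff_distrib mult_1_left)
    ultimately show ?thesis
      by linarith
  qed
  have "real L * ((1 - ln 2) * (1 / (13 * real n))) = (\<Sum>l\<in>{1..L}. (1 - ln 2) * (1 / (13 * real n)))"
    by simp
  also have "\<dots> \<le> (\<Sum>l\<in>{1..L}. 1 / (12 * K l + 1) - ln 2 * (1 / (12 * K l + real n)))"
    by (rule sum_mono) (rule termwise)
  also have "\<dots> = (\<Sum>l\<in>{1..L}. 1 / (12 * K l + 1)) - ln 2 * (\<Sum>l\<in>{1..L}. 1 / (12 * K l + real n))"
    by (simp add: sum_subtractf sum_distrib_left)
  finally have "real L * ((1 - ln 2) * (1 / (13 * real n)))
      \<le> (\<Sum>l\<in>{1..L}. 1 / (12 * K l + 1)) - ln 2 * (\<Sum>l\<in>{1..L}. 1 / (12 * K l + real n))" .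
  moreover have "(1 - ln 2) * (1 / (12 * real n)) \<le> real L * ((1 - ln 2) * (1 / (13 * real n)))"
  proof -
    have "1 / (12 * real n) \<le> 2 * (1 / (13 * real n))"
      using n by (simp add: field_simps)
    then have "(1 - ln 2) * (1 / (12 * real n)) \<le> (1 - ln 2) * (2 * (1 / (13 * real n)))"
      using ln2 by (intro mult_left_mono) auto
    also have "\<dots> = 2 * ((1 - ln 2) * (1 / (13 * real n)))"
      by simp
    also have "\<dots> \<le> real L * ((1 - ln 2) * (1 / (13 * real n)))"
      using L ln2 by (intro mult_right_mono) auto
    finally show ?thesis .
  qed
  moreover have "(1 - ln 2) * (1 / (12 * real n)) = 1 / (12 * real n) - ln 2 * (1 / (12 * real n))"
    "ln 2 * (1 / (12 * real n) - (\<Sum>l\<in>{1..L}. 1 / (12 * K l + real n)))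
      = ln 2 * (1 / (12 * real n)) - ln 2 * (\<Sum>l\<in>{1..L}. 1 / (12 * K l + real n))"
    by (simp_all only: left_diff_distrib right_diff_distrib mult_1_left)
  ultimately show ?thesis
    by linarith
qed

lemma ln_le_ln_fact_diff_sum:
  fixes k :: "'a \<Rightarrow> nat"
  assumes M: "M \<ge> 1" and le: "M * (\<Prod>l\<in>I. fact (k l)) \<le> fact n" and "finite I"
  shows "ln (real M) \<le> ln (fact n) - (\<Sum>l\<in>I. ln (fact (k l)))"
proof -
  have fact_pos: "0 < (\<Prod>l\<in>I. fact (k l) :: real)"
    by (rule prod_pos) simp
  have "real (M * (\<Prod>l\<in>I. fact (k l))) \<le> real (fact n)"
    using le by (simp only: of_nat_le_iff)
  then have "real M * (\<Prod>l\<in>I. fact (k l)) \<le> fact n"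
    by (simp add: of_nat_prod)
  then have "ln (real M * (\<Prod>l\<in>I. fact (k l))) \<le> ln (fact n)"
    using M fact_pos by (subst ln_le_cancel_iff) auto
  moreover have "ln (real M * (\<Prod>l\<in>I. fact (k l))) = ln (real M) + (\<Sum>l\<in>I. ln (fact (k l)))"
    using M fact_pos \<open>finite I\<close> by (simp add: ln_mult ln_prod)
  ultimately show ?thesis
    by simp
qed

theorem rate_le_rate_upper_bound:
  fixes k :: "nat \<Rightarrow> nat" and n L M :: nat
  assumes n: "n \<ge> 1" and L: "L \<ge> 1" and M: "M \<ge> 1"
    and k: "\<And>l. l \<in> {1..L} \<Longrightarrow> k l \<ge> 1" and sum_k: "(\<Sum>l\<in>{1..L}. k l) = n"
    and multinomial: "M * (\<Prod>l\<in>{1..L}. fact (k l)) \<le> fact n"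
  shows "log 2 (real M) / real n \<le> rate_upper_bound n L (\<lambda>l. real (k l) / real n)"
proof (cases "L = 1")
  case True
  with sum_k have "k 1 = n"
    by simp
  with True multinomial have "M * fact n \<le> 1 * fact n"
    by simp
  then have "M \<le> 1"
    using fact_gt_zero[of n] by (simp only: mult_le_cancel2) blast
  with True \<open>k 1 = n\<close> M n show ?thesis
    by (simp add: rate_upper_bound_def entropy2_def)
next
  case False
  with L have L2: "L \<ge> 2"
    by simp
  have n_pos: "real n > 0"
    using n by simp
  from M multinomial have "ln (real M) \<le> ln (fact n) - (\<Sum>l\<in>{1..L}. ln (fact (k l)))"
    by (rule ln_le_ln_fact_diff_sum) simp
  moreover note ln_multinomial_le[OF n k sum_k]
  moreover have "real (k l) \<le> real n" if "l \<in> {1..L}" for l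
    using member_le_sum[of l "{1..L}" k] that sum_k by simp
  with k have "1 / (12 * real n) - (\<Sum>l\<in>{1..L}. 1 / (12 * real (k l) + 1))
      \<le> ln 2 * (1 / (12 * real n) - (\<Sum>l\<in>{1..L}. 1 / (12 * real (k l) + real n)))"
    by (intro stirling_correction_le L2 n) (simp add: Suc_le_eq)
  moreover have "real n * ln 2 * rate_upper_bound n L (\<lambda>l. real (k l) / real n)
      = real n * ln (real n) - (\<Sum>l\<in>{1..L}. real (k l) * ln (real (k l)))
        + ln 2 * (1 / (12 * real n) - (\<Sum>l\<in>{1..L}. 1 / (12 * real (k l) + real n)))
        + (1 - real L) * ln (2 * pi) / 2 - (\<Sum>l\<in>{1..L}. ln (real (k l))) / 2 + ln (real n) / 2"
  proof (rule rate_upper_bound_ln_form[OF n])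
    show "real (k l) > 0" if "l \<in> {1..L}" for l
      using k[OF that] by simp
    show "(\<Sum>l\<in>{1..L}. real (k l)) = real n"
      using sum_k by (simp flip: of_nat_sum)
  qed
  ultimately have "ln (real M) \<le> real n * ln 2 * rate_upper_bound n L (\<lambda>l. real (k l) / real n)"
    by linarith
  then show ?thesis
    using n_pos by (simp add: log_def pos_divide_le_eq mult.commute)
qed

theorem corollary4:
  fixes n M L :: nat and xs :: "nat \<Rightarrow> complex" and Pw s2 \<epsilon> B \<delta> :: real
    and g :: "complex \<Rightarrow> ennreal"
    and u :: "nat \<Rightarrow> nat \<Rightarrow> complex" and D :: "nat \<Rightarrow> nat \<Rightarrow> complex set"
  assumes "n \<ge> 1" and "M \<ge> 1" and "L \<ge> 1"
    and "inj_on xs {1..L}"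
    and "Pw > 0" and "s2 > 0"
    and "g \<in> borel_measurable borel"
    and "\<epsilon> > 0" and "\<epsilon> \<le> 1"
    and "is_code_eps_B_delta s2 g n M L xs Pw \<epsilon> B \<delta> u D"
    and "homogeneous s2 n M L xs u D"
  shows "(\<forall>l\<in>{1..L}. code_type n M u (xs l) > 0) \<longrightarrow>
    log 2 (real M) / real n
      \<le> entropy2 L (\<lambda>l. code_type n M u (xs l))
        + 1 / (real n)\<^sup>2 * (1 / 12 - (\<Sum>l\<in>{1..L}. 1 / (12 * code_type n M u (xs l) + 1)))
        + 1 / real n * (log 2 (sqrt (2 * pi))
              - (\<Sum>l\<in>{1..L}. log 2 (sqrt (2 * pi * code_type n M u (xs l)))))
        - log 2 (real n) / real n * ((real L - 1) / 2)"
proof (intro impI, fold rate_upper_bound_def)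
  assume pos: "\<forall>l\<in>{1..L}. code_type n M u (xs l) > 0"
  note n = assms(1) and M = assms(2) and hom = assms(11)
  from assms(9,10) have code: "is_code n M L xs Pw u D" and err: "gamma_avg s2 n M u D < 1"
    unfolding is_code_eps_B_delta_def by auto
  define k where "k l = card {t\<in>{1..n}. u 1 t = xs l}" for l
  have type: "code_type n M u (xs l) = real (k l) / real n" if "l \<in> {1..L}" for l
    unfolding k_def using hom M that by (rule homogeneous_code_type_eq)
  have occurs: "\<exists>t\<in>{1..n}. u i t = xs l" if "i \<in> {1..M}" "l \<in> {1..L}" for i l
    using homogeneous_symbol_occurs[OF hom that] pos that by blast
  have "k l \<ge> 1" if "l \<in> {1..L}" for l
    using bspec[OF pos that] type[OF that] by (simp add: zero_less_divide_iff Suc_le_eq)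
  moreover have "(\<Sum>l\<in>{1..L}. k l) = n"
    unfolding k_def using code M
    by (subst sum_card_symbol_occurrences[OF _ assms(4)]) (auto simp: is_code_def)
  moreover have "M * (\<Prod>l\<in>{1..L}. fact (k l)) \<le> fact n"
    unfolding k_def by (rule homogeneous_code_multinomial_bound[OF code hom err assms(4) M occurs])
  ultimately have "log 2 (real M) / real n \<le> rate_upper_bound n L (\<lambda>l. real (k l) / real n)"
    by (intro rate_le_rate_upper_bound n M assms(3))
  also have "rate_upper_bound n L (\<lambda>l. real (k l) / real n)
      = rate_upper_bound n L (\<lambda>l. code_type n M u (xs l))"
    using type by (simp add: rate_upper_bound_def entropy2_def)
  finally show "log 2 (real M) / real n \<le> rate_upper_bound n L (\<lambda>l. code_type n M u (xs l))" .
qed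

end
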